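(* There exists a countable, connected, arc transitive graph $G$ with infinite motion such that for no finite set $C$ does $G$ admit a distinguishing $C$-colouring of its vertex set.
   Context: All graphs are simple and undirected. A graph is arc transitive if its automorphism group acts transitively on ordered pairs $(u,v)$ of adjacent vertices. The motion of an automorphism $\varphi$ is the number (possibly infinite) of vertices $v$ with $\varphi(v)\neq v$; a graph has infinite motion if every non-identity automorphism has infinite motion. For a set $C$, a $C$-colouring of the vertex set $V$ is a map $c\colon V\to C$; an automorphism $\varphi$ preserves $c$ if $c(\varphi(v))=c(v)$ for all $v\in V$; the colouring is distinguishing if the identity is the only automorphism preserving it. *)

theory Defs
  imports Main "HOL-Library.Countable_Set"
begin

definition simple_graph :: "'a set \<Rightarrow> ('a \<Rightarrow> 'a \<Rightarrow> bool) \<Rightarrow> bool" where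
  "simple_graph V E \<longleftrightarrow>
     (\<forall>u v. E u v \<longrightarrow> u \<in> V \<and> v \<in> V) \<and>
     (\<forall>u v. E u v \<longrightarrow> E v u) \<and>
     (\<forall>v. \<not> E v v)"

definition connected_graph :: "'a set \<Rightarrow> ('a \<Rightarrow> 'a \<Rightarrow> bool) \<Rightarrow> bool" where
  "connected_graph V E \<longleftrightarrow> V \<noteq> {} \<and> (\<forall>u\<in>V. \<forall>v\<in>V. E\<^sup>*\<^sup>* u v)"

text \<open>Automorphisms: bijections of V onto itself preserving adjacency and non-adjacency.
  They are considered as maps on V only (values outside V are irrelevant).\<close>
definition automorphism :: "'a set \<Rightarrow> ('a \<Rightarrow> 'a \<Rightarrow> bool) \<Rightarrow> ('a \<Rightarrow> 'a) \<Rightarrow> bool" where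
  "automorphism V E \<phi> \<longleftrightarrow> bij_betw \<phi> V V \<and>
     (\<forall>u\<in>V. \<forall>v\<in>V. E (\<phi> u) (\<phi> v) \<longleftrightarrow> E u v)"

definition arc_transitive :: "'a set \<Rightarrow> ('a \<Rightarrow> 'a \<Rightarrow> bool) \<Rightarrow> bool" where
  "arc_transitive V E \<longleftrightarrow>
     (\<forall>u v x y. E u v \<longrightarrow> E x y \<longrightarrow>
        (\<exists>\<phi>. automorphism V E \<phi> \<and> \<phi> u = x \<and> \<phi> v = y))"

definition moved :: "'a set \<Rightarrow> ('a \<Rightarrow> 'a) \<Rightarrow> 'a set" where
  "moved V \<phi> = {v \<in> V. \<phi> v \<noteq> v}"

definition infinite_motion :: "'a set \<Rightarrow> ('a \<Rightarrow> 'a \<Rightarrow> bool) \<Rightarrow> bool" where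
  "infinite_motion V E \<longleftrightarrow>
     (\<forall>\<phi>. automorphism V E \<phi> \<longrightarrow> (\<exists>v\<in>V. \<phi> v \<noteq> v) \<longrightarrow> infinite (moved V \<phi>))"

definition preserves_colouring :: "'a set \<Rightarrow> ('a \<Rightarrow> 'a) \<Rightarrow> ('a \<Rightarrow> 'c) \<Rightarrow> bool" where
  "preserves_colouring V \<phi> c \<longleftrightarrow> (\<forall>v\<in>V. c (\<phi> v) = c v)"

definition distinguishing_colouring ::
    "'a set \<Rightarrow> ('a \<Rightarrow> 'a \<Rightarrow> bool) \<Rightarrow> 'c set \<Rightarrow> ('a \<Rightarrow> 'c) \<Rightarrow> bool" where
  "distinguishing_colouring V E C c \<longleftrightarrow>
     (\<forall>v\<in>V. c v \<in> C) \<and>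
     (\<forall>\<phi>. automorphism V E \<phi> \<longrightarrow> preserves_colouring V \<phi> c \<longrightarrow> (\<forall>v\<in>V. \<phi> v = v))"

end

theory Submission
  imports Defs
begin

text \<open>The graph has vertex set \<open>\<rat> \<times> {0, 1}\<close>, with \<open>(x, 0)\<close> adjacent to \<open>(y, 1)\<close> iff
  \<open>x < y\<close>. Affine maps of \<open>\<rat>\<close>, applied to both layers and composed with the layer swap when
  they reverse the order, act transitively on arcs. A vertex is determined by its adjacencies to
  all but finitely many vertices, so an automorphism moving only finitely many vertices is the
  identity. Given a finite colouring, colour each \<open>x \<in> \<rat>\<close> by the pair of colours of its two
  vertices. Some interval carries a colouring in which every colour that occurs occurs densely;
  a back-and-forth construction on that interval yields a non-trivial colour-preserving order
  automorphism of \<open>\<rat>\<close>, which induces a non-trivial colour-preserving graph automorphism.\<close>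

section \<open>Colour-preserving automorphisms of countable dense orders\<close>

lemma dense_avoiding_finite:
  fixes a b :: "'a::dense_linorder"
  assumes "a < b" "finite F"
  obtains y where "a < y" "y < b" "y \<notin> F"
proof -
  have "infinite ({a<..<b} - F)" using assms by (simp add: Diff_infinite_finite)
  then obtain y where "y \<in> {a<..<b} - F" using infinite_imp_nonempty by blast
  then show ?thesis using that by auto
qed

definition colours_dense_on :: "('a::linorder \<Rightarrow> 'k) \<Rightarrow> 'a \<Rightarrow> 'a \<Rightarrow> bool" where
  "colours_dense_on \<kappa> \<alpha> \<beta> \<longleftrightarrow> (\<forall>x. \<alpha> < x \<and> x < \<beta> \<longrightarrow>
     (\<forall>\<gamma> \<delta>. \<alpha> \<le> \<gamma> \<and> \<gamma> < \<delta> \<and> \<delta> \<le> \<beta> \<longrightarrow> (\<exists>y. \<gamma> < y \<and> y < \<delta> \<and> \<kappa> y = \<kappa> x)))"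

text \<open>If some colour occurring in \<open>(\<alpha>, \<beta>)\<close> misses a subinterval, that subinterval
  carries strictly fewer colours; so the process stops after finitely many steps.\<close>
lemma colours_dense_subinterval:
  fixes \<kappa> :: "'a::linorder \<Rightarrow> 'k"
  assumes fin: "finite (range \<kappa>)" and "\<alpha> < \<beta>"
  obtains \<alpha>' \<beta>' where "\<alpha> \<le> \<alpha>'" "\<alpha>' < \<beta>'" "\<beta>' \<le> \<beta>" "colours_dense_on \<kappa> \<alpha>' \<beta>'"
  using assms(2)
proof (induction "card (\<kappa> ` {\<alpha><..<\<beta>})" arbitrary: \<alpha> \<beta> thesis rule: less_induct)
  case less
  show ?case
  proof (cases "colours_dense_on \<kappa> \<alpha> \<beta>")
    case True
    then show ?thesis using less.prems by blast
  next
    case False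
    then obtain x \<gamma> \<delta> where x: "\<alpha> < x" "x < \<beta>" and sub: "\<alpha> \<le> \<gamma>" "\<gamma> < \<delta>" "\<delta> \<le> \<beta>"
      and missing: "\<forall>y. \<gamma> < y \<and> y < \<delta> \<longrightarrow> \<kappa> y \<noteq> \<kappa> x"
      unfolding colours_dense_on_def by blast
    have finite_colours: "finite (\<kappa> ` {\<alpha><..<\<beta>})" using fin by (rule finite_subset[rotated]) auto
    have "\<kappa> ` {\<gamma><..<\<delta>} \<subseteq> \<kappa> ` {\<alpha><..<\<beta>} - {\<kappa> x}" using sub missing by force
    then have "card (\<kappa> ` {\<gamma><..<\<delta>}) \<le> card (\<kappa> ` {\<alpha><..<\<beta>} - {\<kappa> x})"
      using finite_colours by (intro card_mono) auto
    also have "\<dots> < card (\<kappa> ` {\<alpha><..<\<beta>})"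
      using finite_colours x by (intro card_Diff1_less) auto
    finally obtain \<alpha>' \<beta>' where "\<gamma> \<le> \<alpha>'" "\<alpha>' < \<beta>'" "\<beta>' \<le> \<delta>" "colours_dense_on \<kappa> \<alpha>' \<beta>'"
      using less.hyps sub(2) by blast
    then show ?thesis using less.prems sub order.trans by metis
  qed
qed

lemma strict_mono_extend_by_id:
  fixes g :: "'a::linorder \<Rightarrow> 'a"
  assumes into: "g ` {\<alpha><..<\<beta>} = {\<alpha><..<\<beta>}" and mono: "strict_mono_on {\<alpha><..<\<beta>} g"
  defines "f \<equiv> \<lambda>x. if x \<in> {\<alpha><..<\<beta>} then g x else x"
  shows "strict_mono f" "surj f"
proof -
  show "strict_mono f"
  proof (rule strict_monoI)
    fix x y :: 'a assume "x < y"
    moreover have "g x \<in> {\<alpha><..<\<beta>}" if "x \<in> {\<alpha><..<\<beta>}" for x using into that by blast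
    ultimately show "f x < f y"
      using strict_mono_onD[OF mono] unfolding f_def
      by (auto simp: not_less) (meson le_less_trans less_le_trans not_less)+
  qed
  show "surj f"
  proof (rule surjI)
    fix y
    have "inv_into {\<alpha><..<\<beta>} g y \<in> {\<alpha><..<\<beta>}" if "y \<in> {\<alpha><..<\<beta>}"
      using inv_into_into[of y g] into that by blast
    then show "f (if y \<in> {\<alpha><..<\<beta>} then inv_into {\<alpha><..<\<beta>} g y else y) = y"
      using into unfolding f_def by (auto simp: f_inv_into_f)
  qed
qed

lemma strict_mono_of_order_iso_relation:
  fixes R :: "('a::linorder \<times> 'a) set"
  assumes dom: "Domain R = {\<alpha><..<\<beta>}" and ran: "Range R = {\<alpha><..<\<beta>}"
    and order: "\<And>x y x' y'. (x, y) \<in> R \<Longrightarrow> (x', y') \<in> R \<Longrightarrow> x < x' \<longleftrightarrow> y < y'"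
  obtains f where "strict_mono f" "surj f" "\<And>x y. (x, y) \<in> R \<Longrightarrow> f x = y"
    "\<And>x. x \<notin> {\<alpha><..<\<beta>} \<Longrightarrow> f x = x"
proof -
  let ?I = "{\<alpha><..<\<beta>}"
  have R_fun: "y = y'" if "(x, y) \<in> R" "(x, y') \<in> R" for x y y'
    using order[OF that] order[OF that(2,1)] by (meson linorder_neqE less_irrefl)
  define g where "g x = (SOME y. (x, y) \<in> R)" for x
  have g: "(x, g x) \<in> R" if "x \<in> ?I" for x
    unfolding g_def using dom that by (auto intro: someI)
  have "g ` ?I = ?I"
  proof
    show "g ` ?I \<subseteq> ?I" using g ran by blast
    show "?I \<subseteq> g ` ?I"
    proof
      fix y assume "y \<in> ?I"
      then obtain x where "(x, y) \<in> R" using ran by blast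
      moreover from this have "x \<in> ?I" using dom by blast
      ultimately show "y \<in> g ` ?I" using g R_fun by blast
    qed
  qed
  moreover have "strict_mono_on ?I g"
  proof (rule strict_mono_onI)
    fix x y assume "x \<in> ?I" "y \<in> ?I" "x < y"
    then show "g x < g y" using order[OF g g] by blast
  qed
  ultimately have mono: "strict_mono (\<lambda>x. if x \<in> ?I then g x else x)"
    and onto: "surj (\<lambda>x. if x \<in> ?I then g x else x)"
    by (rule strict_mono_extend_by_id)+
  have "(if x \<in> ?I then g x else x) = y" if "(x, y) \<in> R" for x y
    using that dom R_fun[OF that g] by auto
  then show ?thesis by (rule that[OF mono onto]) auto
qed

context
  fixes \<kappa> :: "'a::{linorder,countable} \<Rightarrow> 'k" and \<alpha> \<beta> :: 'a
  assumes colours_dense: "colours_dense_on \<kappa> \<alpha> \<beta>"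
begin

definition finite_colour_iso :: "('a \<times> 'a) set \<Rightarrow> bool" where
  "finite_colour_iso R \<longleftrightarrow> finite R \<and> R \<subseteq> {\<alpha><..<\<beta>} \<times> {\<alpha><..<\<beta>} \<and>
     (\<forall>(x, y)\<in>R. \<kappa> y = \<kappa> x) \<and> (\<forall>(x, y)\<in>R. \<forall>(x', y')\<in>R. x < x' \<longleftrightarrow> y < y')"

lemma finite_colour_iso_converse: "finite_colour_iso R \<Longrightarrow> finite_colour_iso (R\<inverse>)"
  unfolding finite_colour_iso_def by auto

text \<open>The new image is chosen between the images of the nearest points of the domain on either
  side, which is possible by density of the colour of \<open>x\<close>.\<close>
lemma finite_colour_iso_extend_domain:
  assumes R: "finite_colour_iso R" and x: "x \<in> {\<alpha><..<\<beta>}"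
  shows "\<exists>y. finite_colour_iso (insert (x, y) R)"
proof (cases "x \<in> Domain R")
  case True
  then obtain y where "(x, y) \<in> R" by blast
  then show ?thesis using R by (metis insert_absorb)
next
  case new: False
  have finR: "finite R" and inR: "R \<subseteq> {\<alpha><..<\<beta>} \<times> {\<alpha><..<\<beta>}"
    and colR: "\<forall>(x, y)\<in>R. \<kappa> y = \<kappa> x" and ordR: "\<forall>(x, y)\<in>R. \<forall>(x', y')\<in>R. x < x' \<longleftrightarrow> y < y'"
    using R unfolding finite_colour_iso_def by auto
  define L where "L = insert \<alpha> {y'. \<exists>x'. (x', y') \<in> R \<and> x' < x}"
  define U where "U = insert \<beta> {y'. \<exists>x'. (x', y') \<in> R \<and> x < x'}"
  have "L \<subseteq> insert \<alpha> (snd ` R)" "U \<subseteq> insert \<beta> (snd ` R)"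
    unfolding L_def U_def by force+
  then have "finite L" "finite U" using finR by (auto intro: finite_subset)
  have L_below_U: "l < u" if "l \<in> L" "u \<in> U" for l u
    using that x inR ordR unfolding L_def U_def by fastforce
  have "Max L < Min U"
    using \<open>finite L\<close> \<open>finite U\<close> by (intro L_below_U Max_in Min_in) (auto simp: L_def U_def)
  moreover have "\<alpha> \<le> Max L" "Min U \<le> \<beta>"
    using \<open>finite L\<close> \<open>finite U\<close> unfolding L_def U_def by auto
  ultimately obtain y where y: "Max L < y" "y < Min U" "\<kappa> y = \<kappa> x"
    using colours_dense x unfolding colours_dense_on_def by (meson greaterThanLessThan_iff)
  have "x' < x \<longleftrightarrow> y' < y" "x < x' \<longleftrightarrow> y < y'" if "(x', y') \<in> R" for x' y'
  proof -
    have "x' \<noteq> x" using that new by blast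
    moreover have "y' < y" if "x' < x"
    proof -
      have "y' \<in> L" using that \<open>(x', y') \<in> R\<close> by (auto simp: L_def)
      then show ?thesis using \<open>finite L\<close> y(1) by (meson Max_ge le_less_trans)
    qed
    moreover have "y < y'" if "x < x'"
    proof -
      have "y' \<in> U" using that \<open>(x', y') \<in> R\<close> by (auto simp: U_def)
      then show ?thesis using \<open>finite U\<close> y(2) by (meson Min_le less_le_trans)
    qed
    ultimately show "x' < x \<longleftrightarrow> y' < y" "x < x' \<longleftrightarrow> y < y'"
      by (metis linorder_neqE not_less_iff_gr_or_eq)+
  qed
  moreover have "\<alpha> < y" "y < \<beta>" using y \<open>\<alpha> \<le> Max L\<close> \<open>Min U \<le> \<beta>\<close> by auto
  ultimately have "finite_colour_iso (insert (x, y) R)"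
    using finR inR colR ordR x y(3) unfolding finite_colour_iso_def by auto
  then show ?thesis by blast
qed

lemma finite_colour_iso_extend_range:
  assumes R: "finite_colour_iso R" and y: "y \<in> {\<alpha><..<\<beta>}"
  shows "\<exists>x. finite_colour_iso (insert (x, y) R)"
proof -
  obtain x where "finite_colour_iso (insert (y, x) (R\<inverse>))"
    using finite_colour_iso_extend_domain[OF finite_colour_iso_converse[OF R] y] by blast
  moreover have "(insert (y, x) (R\<inverse>))\<inverse> = insert (x, y) R" by auto
  ultimately show ?thesis using finite_colour_iso_converse by metis
qed

text \<open>Step \<open>2k\<close> puts the \<open>k\<close>-th element of the enumeration \<open>from_nat\<close> into the domain,
  step \<open>2k + 1\<close> puts it into the range.\<close>
fun back_and_forth :: "'a \<Rightarrow> 'a \<Rightarrow> nat \<Rightarrow> ('a \<times> 'a) set" where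
  "back_and_forth a b 0 = {(a, b)}"
| "back_and_forth a b (Suc n) =
     (let R = back_and_forth a b n; z = from_nat (n div 2) in
      if z \<notin> {\<alpha><..<\<beta>} then R
      else if even n then insert (z, SOME y. finite_colour_iso (insert (z, y) R)) R
      else insert (SOME x. finite_colour_iso (insert (x, z) R), z) R)"

lemma finite_colour_iso_back_and_forth:
  assumes "finite_colour_iso {(a, b)}"
  shows "finite_colour_iso (back_and_forth a b n)"
proof (induction n)
  case 0
  then show ?case using assms by simp
next
  case (Suc n)
  let ?R = "back_and_forth a b n" and ?z = "from_nat (n div 2) :: 'a"
  have "finite_colour_iso (insert (?z, SOME y. finite_colour_iso (insert (?z, y) ?R)) ?R)"
    and "finite_colour_iso (insert (SOME x. finite_colour_iso (insert (x, ?z) ?R), ?z) ?R)"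
    if "?z \<in> {\<alpha><..<\<beta>}"
    using someI_ex[OF finite_colour_iso_extend_domain[OF Suc.IH that]]
      someI_ex[OF finite_colour_iso_extend_range[OF Suc.IH that]] by blast+
  then show ?case using Suc.IH by (simp add: Let_def)
qed

lemma back_and_forth_mono: "m \<le> n \<Longrightarrow> back_and_forth a b m \<subseteq> back_and_forth a b n"
  by (rule lift_Suc_mono_le[of "back_and_forth a b"]) (auto simp: Let_def)

lemma back_and_forth_domain:
  "x \<in> {\<alpha><..<\<beta>} \<Longrightarrow> x \<in> Domain (back_and_forth a b (Suc (2 * to_nat x)))"
  by (auto simp: Let_def)

lemma back_and_forth_range:
  "y \<in> {\<alpha><..<\<beta>} \<Longrightarrow> y \<in> Range (back_and_forth a b (Suc (Suc (2 * to_nat y))))"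
  by (auto simp: Let_def)

lemma colour_preserving_order_automorphism:
  assumes a: "a \<in> {\<alpha><..<\<beta>}" and b: "b \<in> {\<alpha><..<\<beta>}" and ab: "\<kappa> b = \<kappa> a"
  obtains f where "strict_mono f" "surj f" "\<And>x. \<kappa> (f x) = \<kappa> x" "f a = b"
proof -
  let ?I = "{\<alpha><..<\<beta>}"
  define R where "R = (\<Union>n. back_and_forth a b n)"
  have iso: "finite_colour_iso (back_and_forth a b n)" for n
    using a b ab by (intro finite_colour_iso_back_and_forth) (simp add: finite_colour_iso_def)
  have R_in: "R \<subseteq> ?I \<times> ?I" and R_colour: "\<kappa> y = \<kappa> x" if "(x, y) \<in> R" for x y
    using iso that unfolding R_def finite_colour_iso_def by blast+
  have R_order: "x < x' \<longleftrightarrow> y < y'" if xy: "(x, y) \<in> R" "(x', y') \<in> R" for x y x' y'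
  proof -
    obtain m n where "(x, y) \<in> back_and_forth a b m" "(x', y') \<in> back_and_forth a b n"
      using xy unfolding R_def by blast
    then have "(x, y) \<in> back_and_forth a b (max m n)" "(x', y') \<in> back_and_forth a b (max m n)"
      using back_and_forth_mono by (meson max.cobounded1 max.cobounded2 subsetD)+
    then show ?thesis using iso[of "max m n"] unfolding finite_colour_iso_def by blast
  qed
  have "?I \<subseteq> Domain R" "?I \<subseteq> Range R"
    using back_and_forth_domain[of _ a b] back_and_forth_range[of _ a b]
    unfolding R_def by (meson Domain_mono Range_mono UN_upper UNIV_I subsetD subsetI)+
  then have "Domain R = ?I" "Range R = ?I" using R_in by blast+
  then obtain f where "strict_mono f" "surj f" and f_R: "\<And>x y. (x, y) \<in> R \<Longrightarrow> f x = y"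
    and f_id: "\<And>x. x \<notin> ?I \<Longrightarrow> f x = x"
    using strict_mono_of_order_iso_relation R_order by blast
  moreover have "\<kappa> (f x) = \<kappa> x" for x
  proof (cases "x \<in> ?I")
    case True
    then obtain y where "(x, y) \<in> R" using \<open>Domain R = ?I\<close> by blast
    then show ?thesis using f_R R_colour by metis
  qed (simp add: f_id)
  moreover have "(a, b) \<in> R" unfolding R_def using back_and_forth.simps(1) by blast
  ultimately show ?thesis using that f_R by blast
qed

end

lemma finite_colouring_order_automorphism:
  fixes \<kappa> :: "'a::{unbounded_dense_linorder,countable} \<Rightarrow> 'k"
  assumes "finite (range \<kappa>)"
  obtains f where "strict_mono f" "surj f" "\<And>x. \<kappa> (f x) = \<kappa> x" "f \<noteq> id"
proof -
  obtain \<alpha>0 \<beta>0 :: 'a where "\<alpha>0 < \<beta>0" using gt_ex[of undefined] by blast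
  then obtain \<alpha> \<beta> where "\<alpha> < \<beta>" and colours_dense: "colours_dense_on \<kappa> \<alpha> \<beta>"
    using colours_dense_subinterval[OF assms] by blast
  then obtain a where a: "\<alpha> < a" "a < \<beta>" using dense_order_class.dense by blast
  then have "\<exists>b. a < b \<and> b < \<beta> \<and> \<kappa> b = \<kappa> a"
    using colours_dense less_imp_le unfolding colours_dense_on_def by blast
  then obtain b where b: "a < b" "b < \<beta>" "\<kappa> b = \<kappa> a" by blast
  have "a \<in> {\<alpha><..<\<beta>}" "b \<in> {\<alpha><..<\<beta>}" using a b by auto
  then obtain f where "strict_mono f" "surj f" "\<And>x. \<kappa> (f x) = \<kappa> x" "f a = b"
    using colour_preserving_order_automorphism[OF colours_dense _ _ b(3)] by blast
  moreover have "f \<noteq> id" using b \<open>f a = b\<close> by auto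
  ultimately show ?thesis using that by blast
qed

definition order_bigraph :: "'a::linorder \<times> bool \<Rightarrow> 'a \<times> bool \<Rightarrow> bool" where
  "order_bigraph p q \<longleftrightarrow>
     (\<not> snd p \<and> snd q \<and> fst p < fst q) \<or> (snd p \<and> \<not> snd q \<and> fst q < fst p)"

lemma order_bigraph_iff:
  "order_bigraph (a, i) (b, j) \<longleftrightarrow> j = (\<not> i) \<and> a \<noteq> b \<and> (a < b \<longleftrightarrow> \<not> i)"
  by (cases i; cases j) (auto simp: order_bigraph_def)

lemma simple_graph_order_bigraph: "simple_graph UNIV order_bigraph"
  unfolding simple_graph_def order_bigraph_def by auto

lemma connected_order_bigraph:
  "connected_graph (UNIV :: ('a::{linorder,no_top,no_bot} \<times> bool) set) order_bigraph"
proof -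
  have sym: "order_bigraph\<inverse>\<inverse> = (order_bigraph :: 'a \<times> bool \<Rightarrow> _)"
    by (auto simp: order_bigraph_def fun_eq_iff)
  have to_top: "order_bigraph\<^sup>*\<^sup>* (x, i) (t, True)" if "s < x" "x < t" for x s t :: 'a and i
  proof (cases i)
    case True
    have "order_bigraph (x, True) (s, False)" "order_bigraph (s, False) (t, True)"
      using that by (auto simp: order_bigraph_def)
    then have "order_bigraph\<^sup>*\<^sup>* (x, True) (t, True)"
      by (meson converse_rtranclp_into_rtranclp r_into_rtranclp)
    then show ?thesis using True by simp
  next
    case False
    have "order_bigraph (x, False) (t, True)" using that by (simp add: order_bigraph_def)
    then show ?thesis using False by simp
  qed
  have "order_bigraph\<^sup>*\<^sup>* (x, i) (y, j)" for x y :: 'a and i j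
  proof -
    obtain s where s: "s < min x y" using lt_ex by blast
    obtain t where t: "max x y < t" using gt_ex by blast
    have "order_bigraph\<^sup>*\<^sup>* (x, i) (t, True)" "order_bigraph\<^sup>*\<^sup>* (y, j) (t, True)"
      using s t by (auto intro!: to_top)
    then show ?thesis using rtranclp_converseI[of order_bigraph] sym by (metis rtranclp_trans)
  qed
  then show ?thesis unfolding connected_graph_def by auto
qed

lemma automorphism_order_bigraph:
  assumes "bij f" and f_order: "\<And>u v. f u < f v \<longleftrightarrow> (if s then v < u else u < v)"
  shows "automorphism UNIV order_bigraph (map_prod f (if s then Not else id))"
proof -
  let ?g = "if s then Not else id"
  have "bij ?g" by (auto simp: bij_def inj_def surj_def)
  from bij_betw_map_prod[OF assms(1) this] have "bij (map_prod f ?g)"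
    by (simp only: UNIV_Times_UNIV)
  moreover have "order_bigraph (f x, ?g i) (f y, ?g j) \<longleftrightarrow> order_bigraph (x, i) (y, j)"
    for x y i j
    using f_order[of x y] f_order[of y x] by (cases s) (auto simp: order_bigraph_def)
  ultimately show ?thesis unfolding automorphism_def by auto
qed

lemma affine_map_through:
  fixes x y x' y' :: "'a::linordered_field"
  assumes "x \<noteq> y" "x' \<noteq> y'"
  obtains f where "bij f" "f x = x'" "f y = y'"
    "\<And>u v. f u < f v \<longleftrightarrow> (if x < y \<longleftrightarrow> y' < x' then v < u else u < v)"
proof -
  define m where "m = (y' - x') / (y - x)"
  have "m \<noteq> 0" using assms by (simp add: m_def)
  have m_neg: "m < 0 \<longleftrightarrow> (x < y \<longleftrightarrow> y' < x')"
    using assms by (auto simp: m_def divide_less_0_iff)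
  define f where "f t = x' + (t - x) * m" for t
  have "bij f"
  proof (rule bijI')
    show "\<exists>t. s = f t" for s using \<open>m \<noteq> 0\<close> by (intro exI[of _ "x + (s - x') / m"]) (simp add: f_def)
  qed (use \<open>m \<noteq> 0\<close> in \<open>simp add: f_def\<close>)
  moreover have "f x = x'" "f y = y'" using assms by (simp_all add: f_def m_def)
  moreover have "f u < f v \<longleftrightarrow> (if x < y \<longleftrightarrow> y' < x' then v < u else u < v)" for u v
    using \<open>m \<noteq> 0\<close> unfolding f_def m_neg[symmetric]
    by (auto simp: mult_less_cancel_right)
  ultimately show ?thesis using that by blast
qed

lemma arc_transitive_order_bigraph:
  "arc_transitive (UNIV :: ('a::linordered_field \<times> bool) set) order_bigraph"
  unfolding arc_transitive_def
proof (intro allI impI)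
  fix p q p' q' :: "'a \<times> bool"
  assume pq: "order_bigraph p q" and pq': "order_bigraph p' q'"
  obtain a i b j where p: "p = (a, i)" and q: "q = (b, j)" by fastforce
  obtain a' i' b' j' where p': "p' = (a', i')" and q': "q' = (b', j')" by fastforce
  have edge: "j = (\<not> i)" "a \<noteq> b" "a < b \<longleftrightarrow> \<not> i" using pq unfolding p q order_bigraph_iff by auto
  have edge': "j' = (\<not> i')" "a' \<noteq> b'" "a' < b' \<longleftrightarrow> \<not> i'"
    using pq' unfolding p' q' order_bigraph_iff by auto
  define s where "s \<longleftrightarrow> (a < b \<longleftrightarrow> b' < a')"
  obtain f where f: "bij f" "f a = a'" "f b = b'" "\<And>u v. f u < f v \<longleftrightarrow> (if s then v < u else u < v)"
    using affine_map_through[OF edge(2) edge'(2)] unfolding s_def by blast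
  have "(if s then Not else id) i = i'" "(if s then Not else id) j = j'"
    using edge edge' unfolding s_def by (cases i; cases i'; auto)+
  then have "map_prod f (if s then Not else id) p = p'" "map_prod f (if s then Not else id) q = q'"
    using f(2,3) p q p' q' by simp_all
  then show "\<exists>\<phi>. automorphism UNIV order_bigraph \<phi> \<and> \<phi> p = p' \<and> \<phi> q = q'"
    using automorphism_order_bigraph[OF f(1,4)] by blast
qed

lemma order_bigraph_neighbours_determine_vertex:
  fixes p q :: "'a::unbounded_dense_linorder \<times> bool"
  assumes "finite F" and same: "\<And>y k. y \<notin> F \<Longrightarrow> order_bigraph p (y, k) \<longleftrightarrow> order_bigraph q (y, k)"
  shows "p = q"
proof -
  have adj: "order_bigraph (a, i) (y, k) \<longleftrightarrow> k \<noteq> i \<and> (if i then y < a else a < y)" for a y :: 'a and i k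
    by (auto simp: order_bigraph_def)
  obtain a i c j where p: "p = (a, i)" and q: "q = (c, j)" by fastforce
  obtain y where "y \<notin> F" "if i then y < a else a < y"
  proof (cases i)
    case True
    obtain z where "z < a" using lt_ex by blast
    then show ?thesis using dense_avoiding_finite[OF _ \<open>finite F\<close>] that True by metis
  next
    case False
    obtain z where "a < z" using gt_ex by blast
    then show ?thesis using dense_avoiding_finite[OF _ \<open>finite F\<close>] that False by metis
  qed
  then have "j = i" using same[of y "\<not> i"] unfolding p q adj by auto
  moreover have "a = c"
  proof (rule ccontr)
    assume "a \<noteq> c"
    then obtain y where "min a c < y" "y < max a c" "y \<notin> F"
      using dense_avoiding_finite[OF _ \<open>finite F\<close>] by (metis linorder_neqE min_less_iff_disj less_max_iff_disj)
    then show False using same[of y "\<not> i"] unfolding p q adj \<open>j = i\<close>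
      by (cases i) (auto simp: min_less_iff_disj less_max_iff_disj)
  qed
  ultimately show ?thesis using p q by simp
qed

lemma infinite_motion_order_bigraph:
  "infinite_motion (UNIV :: ('a::unbounded_dense_linorder \<times> bool) set) order_bigraph"
  unfolding infinite_motion_def
proof (intro allI impI notI)
  fix \<psi> :: "'a \<times> bool \<Rightarrow> 'a \<times> bool"
  assume aut: "automorphism UNIV order_bigraph \<psi>" and "\<exists>v\<in>UNIV. \<psi> v \<noteq> v"
    and fin: "finite (moved UNIV \<psi>)"
  then obtain p where "\<psi> p \<noteq> p" by blast
  have "\<psi> (y, k) = (y, k)" if "y \<notin> fst ` moved UNIV \<psi>" for y k
    using that unfolding moved_def by force
  then have "order_bigraph (\<psi> p) (y, k) \<longleftrightarrow> order_bigraph p (y, k)"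
    if "y \<notin> fst ` moved UNIV \<psi>" for y k
    using aut that unfolding automorphism_def by (metis UNIV_I)
  then have "\<psi> p = p"
    using fin by (intro order_bigraph_neighbours_determine_vertex[of "fst ` moved UNIV \<psi>"]) auto
  with \<open>\<psi> p \<noteq> p\<close> show False ..
qed

lemma no_finite_distinguishing_colouring_order_bigraph:
  fixes c :: "'a::{unbounded_dense_linorder,countable} \<times> bool \<Rightarrow> 'c"
  assumes "finite C"
  shows "\<not> distinguishing_colouring UNIV order_bigraph C c"
proof
  assume dc: "distinguishing_colouring UNIV order_bigraph C c"
  define \<kappa> where "\<kappa> x = (c (x, False), c (x, True))" for x
  have "range \<kappa> \<subseteq> C \<times> C" using dc unfolding \<kappa>_def distinguishing_colouring_def by auto
  then have "finite (range \<kappa>)" using assms finite_subset by blast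
  then obtain f where f: "strict_mono f" "surj f" "\<And>x. \<kappa> (f x) = \<kappa> x" "f \<noteq> id"
    by (rule finite_colouring_order_automorphism) blast
  have "bij f" using f(1,2) by (simp add: bij_def strict_mono_imp_inj_on)
  then have "automorphism UNIV order_bigraph (map_prod f id)"
    using automorphism_order_bigraph[of f False] strict_mono_less[OF f(1)] by simp
  moreover have "preserves_colouring UNIV (map_prod f id) c"
    unfolding preserves_colouring_def
  proof (intro ballI)
    fix p :: "'a \<times> bool"
    obtain x i where "p = (x, i)" by fastforce
    then show "c (map_prod f id p) = c p" using f(3)[of x] by (cases i) (simp_all add: \<kappa>_def)
  qed
  ultimately have "map_prod f id (x, False) = (x, False)" for x
    using dc unfolding distinguishing_colouring_def by blast
  then have "f = id" by (auto simp: fun_eq_iff)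
  with \<open>f \<noteq> id\<close> show False ..
qed

section \<open>Relabelling the vertices by natural numbers\<close>

definition nat_copy :: "('b::countable \<Rightarrow> 'b \<Rightarrow> bool) \<Rightarrow> nat \<Rightarrow> nat \<Rightarrow> bool" where
  "nat_copy E m n \<longleftrightarrow>
     m \<in> range (to_nat :: 'b \<Rightarrow> nat) \<and> n \<in> range (to_nat :: 'b \<Rightarrow> nat) \<and> E (from_nat m) (from_nat n)"

lemma nat_copy_to_nat [simp]: "nat_copy E (to_nat p) (to_nat q) \<longleftrightarrow> E p q"
  by (simp add: nat_copy_def)

lemma nat_copy_cases:
  assumes "nat_copy E m n"
  obtains p q where "m = to_nat p" "n = to_nat q" "E p q"
  using assms unfolding nat_copy_def by auto

lemma simple_graph_nat_copy:
  fixes E :: "'b::countable \<Rightarrow> 'b \<Rightarrow> bool"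
  shows "simple_graph UNIV E \<Longrightarrow> simple_graph (range (to_nat :: 'b \<Rightarrow> nat)) (nat_copy E)"
  unfolding simple_graph_def by (auto elim!: nat_copy_cases)

lemma connected_graph_nat_copy:
  fixes E :: "'b::countable \<Rightarrow> 'b \<Rightarrow> bool"
  assumes "connected_graph UNIV E"
  shows "connected_graph (range (to_nat :: 'b \<Rightarrow> nat)) (nat_copy E)"
proof -
  have "(nat_copy E)\<^sup>*\<^sup>* (to_nat p) (to_nat q)" if "E\<^sup>*\<^sup>* p q" for p q
    using that by (induction rule: rtranclp_induct) (auto intro: rtranclp.rtrancl_into_rtrancl)
  then show ?thesis using assms unfolding connected_graph_def by auto
qed

lemma automorphism_nat_copy_iff:
  fixes E :: "'b::countable \<Rightarrow> 'b \<Rightarrow> bool"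
  assumes conj: "\<And>p. \<phi> (to_nat p) = to_nat (\<psi> p)"
  shows "automorphism (range (to_nat :: 'b \<Rightarrow> nat)) (nat_copy E) \<phi> \<longleftrightarrow> automorphism UNIV E \<psi>"
proof -
  have "inj_on \<phi> (range (to_nat :: 'b \<Rightarrow> nat)) \<longleftrightarrow> inj \<psi>"
    unfolding inj_on_def by (auto simp: conj inj_eq[OF inj_to_nat])
  moreover have "\<phi> ` range (to_nat :: 'b \<Rightarrow> nat) = range (to_nat :: 'b \<Rightarrow> nat) \<longleftrightarrow> range \<psi> = UNIV"
    using inj_image_eq_iff[OF inj_to_nat, of "range \<psi>" UNIV] by (simp add: image_image conj)
  ultimately have
    "bij_betw \<phi> (range (to_nat :: 'b \<Rightarrow> nat)) (range (to_nat :: 'b \<Rightarrow> nat)) \<longleftrightarrow> bij \<psi>"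
    unfolding bij_betw_def by blast
  then show ?thesis unfolding automorphism_def by (simp add: conj)
qed

lemma to_nat_from_nat_automorphism:
  assumes "automorphism (range (to_nat :: 'b::countable \<Rightarrow> nat)) E \<phi>"
  shows "to_nat (from_nat (\<phi> (to_nat p)) :: 'b) = \<phi> (to_nat (p :: 'b))"
proof -
  have "\<phi> (to_nat p) \<in> range (to_nat :: 'b \<Rightarrow> nat)"
    using assms unfolding automorphism_def by (meson bij_betwE rangeI)
  then show ?thesis by auto
qed

lemma arc_transitive_nat_copy:
  fixes E :: "'b::countable \<Rightarrow> 'b \<Rightarrow> bool"
  assumes "arc_transitive UNIV E"
  shows "arc_transitive (range (to_nat :: 'b \<Rightarrow> nat)) (nat_copy E)"
  unfolding arc_transitive_def
proof (intro allI impI)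
  fix m n m' n' assume "nat_copy E m n" "nat_copy E m' n'"
  then obtain p q p' q' where "m = to_nat p" "n = to_nat q" "m' = to_nat p'" "n' = to_nat q'"
    and "E p q" "E p' q'" by (auto elim!: nat_copy_cases)
  moreover from this obtain \<psi> where "automorphism UNIV E \<psi>" "\<psi> p = p'" "\<psi> q = q'"
    using assms unfolding arc_transitive_def by blast
  moreover have "automorphism (range (to_nat :: 'b \<Rightarrow> nat)) (nat_copy E) (to_nat \<circ> \<psi> \<circ> from_nat)"
    using automorphism_nat_copy_iff[of "to_nat \<circ> \<psi> \<circ> from_nat" \<psi>] \<open>automorphism UNIV E \<psi>\<close>
    by simp
  ultimately show
    "\<exists>\<phi>. automorphism (range (to_nat :: 'b \<Rightarrow> nat)) (nat_copy E) \<phi> \<and> \<phi> m = m' \<and> \<phi> n = n'"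
    by auto
qed

lemma infinite_motion_nat_copy:
  fixes E :: "'b::countable \<Rightarrow> 'b \<Rightarrow> bool"
  assumes "infinite_motion UNIV E"
  shows "infinite_motion (range (to_nat :: 'b \<Rightarrow> nat)) (nat_copy E)"
  unfolding infinite_motion_def
proof (intro allI impI)
  fix \<phi> assume aut: "automorphism (range (to_nat :: 'b \<Rightarrow> nat)) (nat_copy E) \<phi>"
    and "\<exists>v\<in>range (to_nat :: 'b \<Rightarrow> nat). \<phi> v \<noteq> v"
  define \<psi> :: "'b \<Rightarrow> 'b" where "\<psi> p = from_nat (\<phi> (to_nat p))" for p
  have conj: "\<phi> (to_nat p) = to_nat (\<psi> p)" for p
    unfolding \<psi>_def using to_nat_from_nat_automorphism[OF aut, of p] by simp
  then have "automorphism UNIV E \<psi>" using aut automorphism_nat_copy_iff by blast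
  moreover have moved: "moved (range (to_nat :: 'b \<Rightarrow> nat)) \<phi> = to_nat ` moved UNIV \<psi>"
    unfolding moved_def by (auto simp: conj)
  moreover have "\<exists>p. \<psi> p \<noteq> p" using \<open>\<exists>v\<in>range (to_nat :: 'b \<Rightarrow> nat). \<phi> v \<noteq> v\<close> conj by auto
  ultimately have "infinite (moved UNIV \<psi>)" using assms unfolding infinite_motion_def by blast
  then show "infinite (moved (range (to_nat :: 'b \<Rightarrow> nat)) \<phi>)"
    unfolding moved by (simp add: finite_image_iff inj_on_def)
qed

lemma distinguishing_colouring_nat_copy:
  fixes E :: "'b::countable \<Rightarrow> 'b \<Rightarrow> bool"
  assumes "distinguishing_colouring (range (to_nat :: 'b \<Rightarrow> nat)) (nat_copy E) C c"
  shows "distinguishing_colouring UNIV E C (c \<circ> to_nat)"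
  unfolding distinguishing_colouring_def
proof (intro conjI allI impI ballI)
  show "(c \<circ> to_nat) p \<in> C" for p :: 'b using assms unfolding distinguishing_colouring_def by simp
  fix \<psi> p assume "automorphism UNIV E \<psi>" and "preserves_colouring UNIV \<psi> (c \<circ> to_nat)"
  then have "automorphism (range (to_nat :: 'b \<Rightarrow> nat)) (nat_copy E) (to_nat \<circ> \<psi> \<circ> from_nat)"
    and "preserves_colouring (range (to_nat :: 'b \<Rightarrow> nat)) (to_nat \<circ> \<psi> \<circ> from_nat) c"
    using automorphism_nat_copy_iff[of "to_nat \<circ> \<psi> \<circ> from_nat" \<psi>]
    unfolding preserves_colouring_def by auto
  then have "to_nat (\<psi> p) = to_nat p"
    using assms unfolding distinguishing_colouring_def by force
  then show "\<psi> p = p" by simp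
qed

theorem theorem2:
  shows "\<exists>(V :: nat set) (E :: nat \<Rightarrow> nat \<Rightarrow> bool).
           simple_graph V E \<and> countable V \<and> connected_graph V E \<and>
           arc_transitive V E \<and> infinite_motion V E \<and>
           (\<forall>(C :: nat set) (c :: nat \<Rightarrow> nat). finite C \<longrightarrow> \<not> distinguishing_colouring V E C c)"
proof (intro exI conjI allI impI)
  let ?V = "range (to_nat :: rat \<times> bool \<Rightarrow> nat)"
    and ?E = "nat_copy (order_bigraph :: rat \<times> bool \<Rightarrow> _)"
  show "simple_graph ?V ?E" by (rule simple_graph_nat_copy[OF simple_graph_order_bigraph])
  show "countable ?V" by simp
  show "connected_graph ?V ?E" by (rule connected_graph_nat_copy[OF connected_order_bigraph])
  show "arc_transitive ?V ?E" by (rule arc_transitive_nat_copy[OF arc_transitive_order_bigraph])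
  show "infinite_motion ?V ?E" by (rule infinite_motion_nat_copy[OF infinite_motion_order_bigraph])
  show "\<not> distinguishing_colouring ?V ?E C c" if "finite C" for C :: "nat set" and c :: "nat \<Rightarrow> nat"
    using distinguishing_colouring_nat_copy no_finite_distinguishing_colouring_order_bigraph[OF that]
    by blast
qed

end
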